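(* Let $G$ be a topological gyrogroup. Then $G^{\bullet}$ is $\sigma$-compact if and only if $G$ is $\sigma$-compact.
   Context: A gyrogroup is a set $G$ with a binary operation $\oplus$ such that: (G1) there is a unique identity $0$ with $0\oplus a=a=a\oplus 0$; (G2) each $x$ has a unique inverse $\ominus x$ with $\ominus x\oplus x=0=x\oplus(\ominus x)$; (G3) for all $x,y$ there is an automorphism $\mathrm{gyr}[x,y]$ of $(G,\oplus)$ with $x\oplus(y\oplus z)=(x\oplus y)\oplus \mathrm{gyr}[x,y](z)$ for all $z$; (G4) $\mathrm{gyr}[x\oplus y,y]=\mathrm{gyr}[x,y]$. A topological gyrogroup is a gyrogroup with a topology (all spaces are assumed $T_1$) such that $\oplus$ is jointly continuous and $x\mapsto\ominus x$ is continuous. A space is $\sigma$-compact if it is a countable union of compact subsets. Construction: let $J=[0,1)$ and let $G^{\bullet}$ be the set of all functions $f:J\to G$ for which there exist $0=a_0<a_1<\dots<a_n=1$ with $f$ constant on each $[a_k,a_{k+1})$, with pointwise operation $(f\oplus^{\bullet}g)(r)=f(r)\oplus g(r)$. For an open neighbourhood $V$ of $0$ in $G$ and $\varepsilon>0$ let $O(V,\varepsilon)=\{f\in G^{\bullet}:\mu(\{r\in J: f(r)\notin V\})<\varepsilon\}$, $\mu$ Lebesgue measure. $G^{\bullet}$ carries the topological gyrogroup topology in which the sets $f\oplus^{\bullet}O(V,\varepsilon)$ form a local base at each $f\in G^{\bullet}$. *)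

theory Defs
  imports "HOL-Analysis.Analysis"
begin

definition gyrogroup :: "'a set \<Rightarrow> ('a \<Rightarrow> 'a \<Rightarrow> 'a) \<Rightarrow> 'a \<Rightarrow> ('a \<Rightarrow> 'a) \<Rightarrow> bool" where
  "gyrogroup G gop e neg \<longleftrightarrow>
     (\<forall>x\<in>G. \<forall>y\<in>G. gop x y \<in> G) \<and> e \<in> G \<and> (\<forall>x\<in>G. neg x \<in> G) \<and>
     \<comment> \<open>(G1) unique identity\<close>
     (\<forall>a\<in>G. gop e a = a \<and> gop a e = a) \<and>
     (\<forall>e'\<in>G. (\<forall>a\<in>G. gop e' a = a \<and> gop a e' = a) \<longrightarrow> e' = e) \<and>
     \<comment> \<open>(G2) unique inverse\<close>
     (\<forall>x\<in>G. gop (neg x) x = e \<and> gop x (neg x) = e) \<and>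
     (\<forall>x\<in>G. \<forall>y\<in>G. gop y x = e \<and> gop x y = e \<longrightarrow> y = neg x) \<and>
     \<comment> \<open>(G3), (G4) gyroautomorphisms\<close>
     (\<exists>gyr :: 'a \<Rightarrow> 'a \<Rightarrow> 'a \<Rightarrow> 'a.
        (\<forall>x\<in>G. \<forall>y\<in>G. bij_betw (gyr x y) G G \<and>
            (\<forall>a\<in>G. \<forall>b\<in>G. gyr x y (gop a b) = gop (gyr x y a) (gyr x y b))) \<and>
        (\<forall>x\<in>G. \<forall>y\<in>G. \<forall>z\<in>G. gop x (gop y z) = gop (gop x y) (gyr x y z)) \<and>
        (\<forall>x\<in>G. \<forall>y\<in>G. \<forall>z\<in>G. gyr (gop x y) y z = gyr x y z))"

definition topological_gyrogroup ::
  "'a set \<Rightarrow> ('a \<Rightarrow> 'a \<Rightarrow> 'a) \<Rightarrow> 'a \<Rightarrow> ('a \<Rightarrow> 'a) \<Rightarrow> 'a topology \<Rightarrow> bool" where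
  "topological_gyrogroup G gop e neg T \<longleftrightarrow>
     gyrogroup G gop e neg \<and> topspace T = G \<and> t1_space T \<and>
     continuous_map (prod_topology T T) T (\<lambda>(x, y). gop x y) \<and>
     continuous_map T T neg"

definition sigma_compact :: "'a topology \<Rightarrow> bool" where
  "sigma_compact X \<longleftrightarrow> (\<exists>K :: nat \<Rightarrow> 'a set. (\<forall>n. compactin X (K n)) \<and> topspace X = (\<Union>n. K n))"

text \<open>J = [0,1). Elements of G-bullet are step functions J \<rightarrow> G, extended by undefined outside J.\<close>
definition J :: "real set" where "J = {0..<1}"

definition step_funs :: "'a set \<Rightarrow> (real \<Rightarrow> 'a) set" where
  "step_funs G = {f. (\<forall>r. r \<notin> J \<longrightarrow> f r = undefined) \<and>
     (\<exists>(a :: nat \<Rightarrow> real) n. a 0 = 0 \<and> a n = 1 \<and> (\<forall>k<n. a k < a (Suc k)) \<and>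
        (\<forall>k<n. \<exists>c\<in>G. \<forall>r\<in>{a k..<a (Suc k)}. f r = c))}"

definition pw_op :: "('a \<Rightarrow> 'a \<Rightarrow> 'a) \<Rightarrow> (real \<Rightarrow> 'a) \<Rightarrow> (real \<Rightarrow> 'a) \<Rightarrow> real \<Rightarrow> 'a" where
  "pw_op gop f g = (\<lambda>r. if r \<in> J then gop (f r) (g r) else undefined)"

definition O_nbhd :: "'a set \<Rightarrow> 'a set \<Rightarrow> real \<Rightarrow> (real \<Rightarrow> 'a) set" where
  "O_nbhd G V \<epsilon> = {f \<in> step_funs G. measure lebesgue {r \<in> J. f r \<notin> V} < \<epsilon>}"

definition bullet_topology ::
  "'a set \<Rightarrow> ('a \<Rightarrow> 'a \<Rightarrow> 'a) \<Rightarrow> 'a \<Rightarrow> 'a topology \<Rightarrow> (real \<Rightarrow> 'a) topology" where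
  "bullet_topology G gop e T = topology (\<lambda>U. U \<subseteq> step_funs G \<and>
     (\<forall>f\<in>U. \<exists>V \<epsilon>. openin T V \<and> e \<in> V \<and> \<epsilon> > 0 \<and> pw_op gop f ` O_nbhd G V \<epsilon> \<subseteq> U))"

end

theory Submission
  imports Defs
begin

text \<open>If \<open>G\<close> is the union of an increasing sequence of compact sets \<open>K\<^sub>m\<close>, every step function
  with \<open>n\<close> jump points and values in \<open>K\<^sub>m\<close> is the image of a point of \<open>[0,1]^n \<times> K\<^sub>m^(n+1)\<close>
  under the map sending jump points and values to the step function. This map is continuous,
  because moving the jump points changes the function only on a set of small measure, so
  \<open>G\<^sup>\<bullet>\<close> is a countable union of compact images.

  Conversely, the constant step functions form a closed subset of \<open>G\<^sup>\<bullet>\<close> on which evaluation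
  is continuous: a constant \<open>c\<close> lies in an open \<open>W\<close> iff it lies in the open set of step functions
  with values in \<open>W\<close> on more than half of \<open>J\<close>. Hence every compact subset of \<open>G\<^sup>\<bullet>\<close> meets
  the constants in a compact copy of a compact subset of \<open>G\<close>, and a countable compact cover of
  \<open>G\<^sup>\<bullet>\<close> yields one of \<open>G\<close>.\<close>

section \<open>Gyrogroup algebra\<close>

locale gyro =
  fixes G :: "'a set" and gop :: "'a \<Rightarrow> 'a \<Rightarrow> 'a" and e :: 'a and neg :: "'a \<Rightarrow> 'a"
  assumes gyrogroup: "gyrogroup G gop e neg"
begin

lemma gop_closed [simp]: "x \<in> G \<Longrightarrow> y \<in> G \<Longrightarrow> gop x y \<in> G"
  and e_in [simp]: "e \<in> G"
  and neg_closed [simp]: "x \<in> G \<Longrightarrow> neg x \<in> G"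
  and gop_left_e [simp]: "x \<in> G \<Longrightarrow> gop e x = x"
  and gop_right_e [simp]: "x \<in> G \<Longrightarrow> gop x e = x"
  and gop_left_neg [simp]: "x \<in> G \<Longrightarrow> gop (neg x) x = e"
  and gop_right_neg [simp]: "x \<in> G \<Longrightarrow> gop x (neg x) = e"
  using gyrogroup by (simp_all add: gyrogroup_def)

lemma neg_unique: "x \<in> G \<Longrightarrow> y \<in> G \<Longrightarrow> gop y x = e \<Longrightarrow> gop x y = e \<Longrightarrow> y = neg x"
  using gyrogroup by (simp add: gyrogroup_def)

lemma neg_neg [simp]: "x \<in> G \<Longrightarrow> neg (neg x) = x"
  using neg_unique[of "neg x" x] by simp

lemma neg_e [simp]: "neg e = e"
  using neg_unique[of e e] by simp

text \<open>By (G3), \<open>\<ominus>a \<oplus> (a \<oplus> b) = gyr[\<ominus>a, a] b\<close>, and by (G4) \<open>gyr[\<ominus>a, a] = gyr[0, a]\<close>, which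
  is the identity because \<open>a \<oplus> b = a \<oplus> gyr[0, a] b\<close> by (G3) and left multiplication is injective.\<close>
lemma gop_left_cancel [simp]:
  assumes a: "a \<in> G" and b: "b \<in> G"
  shows "gop (neg a) (gop a b) = b"
proof -
  obtain gyr where bij: "\<forall>x\<in>G. \<forall>y\<in>G. bij_betw (gyr x y) G G"
    and G3: "\<forall>x\<in>G. \<forall>y\<in>G. \<forall>z\<in>G. gop x (gop y z) = gop (gop x y) (gyr x y z)"
    and G4: "\<forall>x\<in>G. \<forall>y\<in>G. \<forall>z\<in>G. gyr (gop x y) y z = gyr x y z"
    using gyrogroup unfolding gyrogroup_def by (elim conjE exE) blast
  have gyr_closed: "gyr x y z \<in> G" if "x \<in> G" "y \<in> G" "z \<in> G" for x y z
    using bij that by (meson bij_betwE)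
  have neg_gop: "gop (neg x) (gop x z) = gyr (neg x) x z" if "x \<in> G" "z \<in> G" for x z
    using G3[rule_format, of "neg x" x z] that gyr_closed by simp
  have left_inj: "y = z" if "x \<in> G" "y \<in> G" "z \<in> G" "gop x y = gop x z" for x y z
  proof -
    have "gyr (neg x) x y = gyr (neg x) x z"
      using that neg_gop[of x y] neg_gop[of x z] by simp
    then show ?thesis
      using bij_betw_imp_inj_on[OF bij[rule_format, of "neg x" x]] that by (simp add: inj_on_eq_iff)
  qed
  have "gop a b = gop a (gyr e a b)"
    using G3[rule_format, of e a b] a b gyr_closed by simp
  then have "gyr e a b = b"
    using left_inj[of a b "gyr e a b"] a b gyr_closed by simp
  then show ?thesis
    using neg_gop[OF a b] G4[rule_format, of "neg a" a b] a b by simp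
qed

lemma gop_right_cancel [simp]: "a \<in> G \<Longrightarrow> b \<in> G \<Longrightarrow> gop a (gop (neg a) b) = b"
  using gop_left_cancel[of "neg a" b] by simp

end

section \<open>Step functions\<close>

lemma steps_mono:
  fixes a :: "nat \<Rightarrow> 'b::order"
  assumes "\<forall>k<n. a k < a (Suc k)" "i \<le> j" "j \<le> n"
  shows "a i \<le> a j"
  using assms(2,3)
proof (induction j)
  case (Suc j)
  then show ?case
    using assms(1) by (metis Suc_le_eq le_Suc_eq order.strict_implies_order order.trans order_refl)
qed simp

lemma steps_cover:
  fixes a :: "nat \<Rightarrow> 'b::linorder"
  assumes "a 0 \<le> r" "r < a n"
  shows "\<exists>k<n. r \<in> {a k..<a (Suc k)}"
  using assms(2)
proof (induction n)
  case (Suc n)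
  then show ?case
    using assms(1) by (cases "r < a n") (auto intro: less_SucI)
qed (use assms(1) in simp)

lemma steps_no_point_between:
  fixes a :: "nat \<Rightarrow> 'b::order"
  assumes "\<forall>k<n. a k < a (Suc k)" "k < n" "j \<le> n"
  shows "a j \<notin> {a k<..<a (Suc k)}"
proof
  assume between: "a j \<in> {a k<..<a (Suc k)}"
  show False
  proof (cases "j \<le> k")
    case True
    then show False
      using between steps_mono[OF assms(1), of j k] assms(2) by (auto simp: less_le_not_le)
  next
    case False
    then show False
      using between steps_mono[OF assms(1), of "Suc k" j] assms(3) by (auto simp: less_le_not_le)
  qed
qed

lemma finite_strict_enumerationE:
  fixes S :: "'b::linorder set"
  assumes "finite S" "S \<noteq> {}"
  obtains a n where "\<forall>k<n. a k < a (Suc k)" "a ` {..n} = S"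
proof -
  define xs where "xs = sorted_list_of_set S"
  have strict: "sorted_wrt (<) xs" and set_xs: "set xs = S"
    using assms by (simp_all add: xs_def)
  then have len: "length xs = Suc (length xs - 1)"
    using assms(2) by (cases xs) auto
  have "(!) xs ` {..length xs - 1} = set xs"
    using len by (metis atLeast0LessThan lessThan_Suc_atMost list.set_map map_nth set_upt)
  moreover have "\<forall>k<length xs - 1. xs ! k < xs ! Suc k"
    using strict len by (metis Suc_less_eq lessI sorted_wrt_nth_less)
  ultimately show ?thesis
    using that set_xs by blast
qed

definition unit_partition :: "(nat \<Rightarrow> real) \<Rightarrow> nat \<Rightarrow> bool" where
  "unit_partition a n \<longleftrightarrow> a 0 = 0 \<and> a n = 1 \<and> (\<forall>k<n. a k < a (Suc k))"

lemma unit_partition_enumerationE: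
  assumes "finite S" "0 \<in> S" "1 \<in> S" "S \<subseteq> {0..1}"
  obtains a n where "unit_partition a n" "a ` {..n} = S"
proof -
  obtain a n where strict: "\<forall>k<n. a k < a (Suc k)" and aS: "a ` {..n} = S"
    using finite_strict_enumerationE[OF assms(1)] assms(2) by blast
  have "0 \<in> a ` {..n}" "1 \<in> a ` {..n}"
    using aS assms(2,3) by simp_all
  then obtain i j where "i \<le> n" "a i = 0" "j \<le> n" "a j = 1"
    by (metis atMost_iff imageE)
  moreover have "a 0 \<in> {0..1}" "a n \<in> {0..1}"
    using aS assms(4) by auto
  ultimately have "a 0 = 0" "a n = 1"
    using steps_mono[OF strict, of 0 i] steps_mono[OF strict, of j n] by auto
  then have "unit_partition a n"
    using strict by (simp add: unit_partition_def)
  with aS that show ?thesis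
    by blast
qed

lemma unit_partition_mono: "unit_partition a n \<Longrightarrow> i \<le> j \<Longrightarrow> j \<le> n \<Longrightarrow> a i \<le> a j"
  unfolding unit_partition_def using steps_mono by blast

lemma unit_partition_cover: "unit_partition a n \<Longrightarrow> r \<in> J \<Longrightarrow> \<exists>k<n. r \<in> {a k..<a (Suc k)}"
  unfolding unit_partition_def J_def using steps_cover[of a r n] by simp

lemma unit_partition_piece_subset: "unit_partition a n \<Longrightarrow> k < n \<Longrightarrow> {a k..<a (Suc k)} \<subseteq> J"
  using unit_partition_mono[of a n 0 k] unit_partition_mono[of a n "Suc k" n]
  by (auto simp: unit_partition_def J_def)

lemma unit_partition_left_in_J: "unit_partition a n \<Longrightarrow> k < n \<Longrightarrow> a k \<in> J"
  using unit_partition_piece_subset[of a n k] by (auto simp: unit_partition_def)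

lemma unit_partition_count_below:
  assumes a: "unit_partition a n" and k: "k < n" "r \<in> {a k..<a (Suc k)}"
  shows "{i. i < n \<and> a (Suc i) \<le> r} = {..<k}"
proof (intro set_eqI iffI)
  fix i assume "i \<in> {i. i < n \<and> a (Suc i) \<le> r}"
  then have "i < n" "a (Suc i) < a (Suc k)"
    using k by auto
  then show "i \<in> {..<k}"
    using unit_partition_mono[OF a, of "Suc k" "Suc i"] by (cases "k \<le> i") auto
next
  fix i assume "i \<in> {..<k}"
  then show "i \<in> {i. i < n \<and> a (Suc i) \<le> r}"
    using k unit_partition_mono[OF a, of "Suc i" k] by auto
qed

lemma step_funsE:
  assumes "f \<in> step_funs G"
  obtains a n where "unit_partition a n" "\<forall>k<n. \<forall>r\<in>{a k..<a (Suc k)}. f r = f (a k)"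
proof -
  obtain a n where a: "unit_partition a n" and c: "\<forall>k<n. \<exists>c\<in>G. \<forall>r\<in>{a k..<a (Suc k)}. f r = c"
    using assms unfolding step_funs_def unit_partition_def by blast
  have "\<forall>k<n. \<forall>r\<in>{a k..<a (Suc k)}. f r = f (a k)"
    using c a by (fastforce simp: unit_partition_def)
  with a that show ?thesis by blast
qed

lemma step_fun_in:
  assumes "f \<in> step_funs G" "r \<in> J"
  shows "f r \<in> G"
proof -
  obtain a n where a: "unit_partition a n" and c: "\<forall>k<n. \<exists>c\<in>G. \<forall>r\<in>{a k..<a (Suc k)}. f r = c"
    using assms unfolding step_funs_def unit_partition_def by blast
  then show ?thesis
    using unit_partition_cover[OF a assms(2)] by metis
qed

text \<open>Break point sets of two step functions can simply be united, which makes this description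
  better suited than partitions for pointwise operations.\<close>
definition jumps_only_at :: "real set \<Rightarrow> (real \<Rightarrow> 'a) \<Rightarrow> bool" where
  "jumps_only_at P f \<longleftrightarrow> (\<forall>r\<in>J. \<forall>r'\<in>J. r \<le> r' \<and> P \<inter> {r<..r'} = {} \<longrightarrow> f r = f r')"

lemma jumps_only_at_mono: "P \<subseteq> Q \<Longrightarrow> jumps_only_at P f \<Longrightarrow> jumps_only_at Q f"
  unfolding jumps_only_at_def by blast

lemma partition_jumps_only_at:
  assumes a: "unit_partition a n" and f: "\<forall>k<n. \<forall>r\<in>{a k..<a (Suc k)}. f r = f (a k)"
  shows "jumps_only_at (a ` {..n}) f"
  unfolding jumps_only_at_def
proof (intro ballI impI)
  fix r r' assume r: "r \<in> J" "r' \<in> J" and rr': "r \<le> r' \<and> a ` {..n} \<inter> {r<..r'} = {}"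
  obtain k where k: "k < n" "r \<in> {a k..<a (Suc k)}"
    using unit_partition_cover[OF a r(1)] by blast
  have "a (Suc k) \<in> a ` {..n}"
    using k by simp
  then have "a (Suc k) \<notin> {r<..r'}"
    using rr' by blast
  then have "r' \<in> {a k..<a (Suc k)}"
    using k rr' by auto
  then show "f r = f r'"
    using f k by metis
qed

lemma jumps_only_at_partitionE:
  assumes "finite P" "jumps_only_at P f"
  obtains a n where "unit_partition a n" "\<forall>k<n. \<forall>r\<in>{a k..<a (Suc k)}. f r = f (a k)"
proof -
  define S where "S = insert 0 (insert 1 (P \<inter> {0<..<1}))"
  have "finite S" "0 \<in> S" "1 \<in> S" "S \<subseteq> {0..1}"
    using assms(1) by (auto simp: S_def)
  then obtain a n where a: "unit_partition a n" and aS: "a ` {..n} = S"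
    by (rule unit_partition_enumerationE)
  then have strict: "\<forall>k<n. a k < a (Suc k)"
    by (simp add: unit_partition_def)
  have "f r = f (a k)" if k: "k < n" and r: "r \<in> {a k..<a (Suc k)}" for k r
  proof -
    have no_break: "P \<inter> {a k<..r} = {}"
    proof (rule ccontr)
      assume "P \<inter> {a k<..r} \<noteq> {}"
      then obtain p where p: "p \<in> P" "a k < p" "p \<le> r" by auto
      have "p \<in> S"
        using p r unit_partition_piece_subset[OF a k] unit_partition_left_in_J[OF a k]
        by (auto simp: S_def J_def)
      then obtain j where "j \<le> n" "p = a j"
        using aS by auto
      then have "p \<notin> {a k<..<a (Suc k)}"
        using steps_no_point_between[OF strict k] by blast
      with p r show False
        by auto
    qed
    have "a k \<in> J" "r \<in> J"
      using unit_partition_piece_subset[OF a k] unit_partition_left_in_J[OF a k] r by auto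
    then show ?thesis
      using assms(2) no_break r unfolding jumps_only_at_def by (metis atLeastLessThan_iff)
  qed
  with a that show ?thesis by blast
qed

lemma step_funs_iff:
  "f \<in> step_funs G \<longleftrightarrow>
     (\<forall>r. r \<notin> J \<longrightarrow> f r = undefined) \<and> f ` J \<subseteq> G \<and> (\<exists>P. finite P \<and> jumps_only_at P f)"
proof
  assume f: "f \<in> step_funs G"
  obtain a n where a: "unit_partition a n" and pieces: "\<forall>k<n. \<forall>r\<in>{a k..<a (Suc k)}. f r = f (a k)"
    by (rule step_funsE[OF f])
  show "(\<forall>r. r \<notin> J \<longrightarrow> f r = undefined) \<and> f ` J \<subseteq> G \<and> (\<exists>P. finite P \<and> jumps_only_at P f)"
    using f partition_jumps_only_at[OF a pieces] step_fun_in[OF f] by (auto simp: step_funs_def)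
next
  assume "(\<forall>r. r \<notin> J \<longrightarrow> f r = undefined) \<and> f ` J \<subseteq> G \<and> (\<exists>P. finite P \<and> jumps_only_at P f)"
  then obtain P where undef: "\<forall>r. r \<notin> J \<longrightarrow> f r = undefined" and vals: "f ` J \<subseteq> G"
    and P: "finite P" "jumps_only_at P f" by blast
  obtain a n where a: "unit_partition a n" and pieces: "\<forall>k<n. \<forall>r\<in>{a k..<a (Suc k)}. f r = f (a k)"
    using jumps_only_at_partitionE[OF P] .
  have "\<forall>k<n. f (a k) \<in> G"
    using vals unit_partition_left_in_J[OF a] by blast
  then show "f \<in> step_funs G"
    using undef a pieces unfolding step_funs_def unit_partition_def by blast
qed

lemma step_fun_undefined: "f \<in> step_funs G \<Longrightarrow> r \<notin> J \<Longrightarrow> f r = undefined"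
  by (simp add: step_funs_def)

lemma step_funsI:
  assumes "\<And>r. r \<notin> J \<Longrightarrow> f r = undefined" "\<And>r. r \<in> J \<Longrightarrow> f r \<in> G"
    and "finite P" "jumps_only_at P f"
  shows "f \<in> step_funs G"
  using assms by (auto simp: step_funs_iff)

lemma step_fun_breaksE:
  assumes "f \<in> step_funs G"
  obtains P where "finite P" "jumps_only_at P f"
  using assms by (auto simp: step_funs_iff)

lemma pw_op_step_funs:
  assumes op: "\<And>x y. x \<in> G \<Longrightarrow> y \<in> G \<Longrightarrow> op x y \<in> G"
    and f: "f \<in> step_funs G" and g: "g \<in> step_funs G"
  shows "pw_op op f g \<in> step_funs G"
proof -
  obtain P where "finite P" "jumps_only_at P f"
    by (rule step_fun_breaksE[OF f])
  moreover obtain Q where "finite Q" "jumps_only_at Q g"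
    by (rule step_fun_breaksE[OF g])
  ultimately have "jumps_only_at (P \<union> Q) f" "jumps_only_at (P \<union> Q) g" "finite (P \<union> Q)"
    using jumps_only_at_mono[of P "P \<union> Q"] jumps_only_at_mono[of Q "P \<union> Q"] by auto
  then have "jumps_only_at (P \<union> Q) (pw_op op f g)"
    unfolding jumps_only_at_def pw_op_def by (metis (no_types, lifting))
  with \<open>finite (P \<union> Q)\<close> show ?thesis
    by (rule step_funsI[rotated 2]) (auto simp: pw_op_def op step_fun_in f g)
qed

definition const_step :: "'a \<Rightarrow> real \<Rightarrow> 'a" where
  "const_step c = (\<lambda>r. if r \<in> J then c else undefined)"

lemma const_step_in_step_funs: "c \<in> G \<Longrightarrow> const_step c \<in> step_funs G"
  by (rule step_funsI[of _ _ "{}"]) (auto simp: const_step_def jumps_only_at_def)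

lemma step_fun_level_set_lmeasurable:
  assumes "f \<in> step_funs G"
  shows "{r \<in> J. Q (f r)} \<in> lmeasurable"
proof -
  obtain a n where a: "unit_partition a n" and pieces: "\<forall>k<n. \<forall>r\<in>{a k..<a (Suc k)}. f r = f (a k)"
    by (rule step_funsE[OF assms])
  have "{r \<in> J. Q (f r)} = (\<Union>k\<in>{k. k < n \<and> Q (f (a k))}. {a k..<a (Suc k)})"
  proof (intro set_eqI iffI)
    fix r assume r: "r \<in> {r \<in> J. Q (f r)}"
    then obtain k where k: "k < n" "r \<in> {a k..<a (Suc k)}"
      using unit_partition_cover[OF a] by blast
    then have "f r = f (a k)"
      using pieces by blast
    then show "r \<in> (\<Union>k\<in>{k. k < n \<and> Q (f (a k))}. {a k..<a (Suc k)})"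
      using r k by auto
  next
    fix r assume "r \<in> (\<Union>k\<in>{k. k < n \<and> Q (f (a k))}. {a k..<a (Suc k)})"
    then obtain k where k: "k < n" "Q (f (a k))" "r \<in> {a k..<a (Suc k)}"
      by blast
    then have "f r = f (a k)" "r \<in> J"
      using pieces unit_partition_piece_subset[OF a k(1)] by blast+
    then show "r \<in> {r \<in> J. Q (f r)}"
      using k by simp
  qed
  also have "\<dots> \<in> lmeasurable"
    by (intro fmeasurable.finite_UN bounded_set_imp_lmeasurable) auto
  finally show ?thesis .
qed

lemma step_fun_level_set_measurable: "f \<in> step_funs G \<Longrightarrow> {r \<in> J. Q (f r)} \<in> sets lebesgue"
  using step_fun_level_set_lmeasurable by blast

lemma step_fun_finite_range:
  assumes "f \<in> step_funs G"
  shows "finite (f ` J)"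
proof -
  obtain a n where a: "unit_partition a n" and pieces: "\<forall>k<n. \<forall>r\<in>{a k..<a (Suc k)}. f r = f (a k)"
    by (rule step_funsE[OF assms])
  have "f r \<in> (\<lambda>k. f (a k)) ` {..<n}" if r: "r \<in> J" for r
  proof -
    obtain k where k: "k < n" "r \<in> {a k..<a (Suc k)}"
      using unit_partition_cover[OF a r] by blast
    then have "f r = f (a k)"
      using pieces by blast
    with k show ?thesis
      by simp
  qed
  then have "f ` J \<subseteq> (\<lambda>k. f (a k)) ` {..<n}"
    by blast
  then show ?thesis
    using finite_surj by blast
qed

lemma step_fun_constant_pieceE:
  assumes "f \<in> step_funs G" "r \<in> J"
  obtains x y where "x < y" "{x..<y} \<subseteq> J" "\<forall>s\<in>{x..<y}. f s = f r"
proof -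
  obtain a n where a: "unit_partition a n" and pieces: "\<forall>k<n. \<forall>r\<in>{a k..<a (Suc k)}. f r = f (a k)"
    by (rule step_funsE[OF assms(1)])
  obtain k where k: "k < n" "r \<in> {a k..<a (Suc k)}"
    using unit_partition_cover[OF a assms(2)] by blast
  then have piece: "\<forall>s\<in>{a k..<a (Suc k)}. f s = f r"
    using pieces by metis
  have "a k < a (Suc k)"
    using k by simp
  then show ?thesis
    by (rule that[OF _ unit_partition_piece_subset[OF a k(1)] piece])
qed

section \<open>The topology of \<open>G\<^sup>\<bullet>\<close>\<close>

lemma O_nbhd_mono:
  assumes "V \<subseteq> V'" "\<epsilon> \<le> \<epsilon>'"
  shows "O_nbhd G V \<epsilon> \<subseteq> O_nbhd G V' \<epsilon>'"
proof
  fix f assume f: "f \<in> O_nbhd G V \<epsilon>"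
  then have fs: "f \<in> step_funs G"
    by (simp add: O_nbhd_def)
  have "{r \<in> J. f r \<notin> V'} \<subseteq> {r \<in> J. f r \<notin> V}"
    using assms(1) by blast
  then have "measure lebesgue {r \<in> J. f r \<notin> V'} \<le> measure lebesgue {r \<in> J. f r \<notin> V}"
    by (rule measure_mono_fmeasurable[OF _ step_fun_level_set_measurable[OF fs]
          step_fun_level_set_lmeasurable[OF fs]])
  then show "f \<in> O_nbhd G V' \<epsilon>'"
    using f assms(2) by (auto simp: O_nbhd_def)
qed

definition bullet_open :: "'a set \<Rightarrow> ('a \<Rightarrow> 'a \<Rightarrow> 'a) \<Rightarrow> 'a \<Rightarrow> 'a topology \<Rightarrow> (real \<Rightarrow> 'a) set \<Rightarrow> bool" where
  "bullet_open G gop e T U \<longleftrightarrow> U \<subseteq> step_funs G \<and>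
     (\<forall>f\<in>U. \<exists>V \<epsilon>. openin T V \<and> e \<in> V \<and> \<epsilon> > 0 \<and> pw_op gop f ` O_nbhd G V \<epsilon> \<subseteq> U)"

lemma bullet_openE:
  assumes "bullet_open G gop e T U" "f \<in> U"
  obtains V \<epsilon> where "openin T V" "e \<in> V" "\<epsilon> > 0" "pw_op gop f ` O_nbhd G V \<epsilon> \<subseteq> U"
  using assms unfolding bullet_open_def by blast

lemma bullet_open_Int:
  assumes S: "bullet_open G gop e T S" and U: "bullet_open G gop e T U"
  shows "bullet_open G gop e T (S \<inter> U)"
proof -
  have "\<exists>V \<epsilon>. openin T V \<and> e \<in> V \<and> \<epsilon> > 0 \<and> pw_op gop f ` O_nbhd G V \<epsilon> \<subseteq> S \<inter> U"
    if SU: "f \<in> S \<inter> U" for f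
  proof -
    obtain V1 \<epsilon>1 where V1: "openin T V1" "e \<in> V1" "\<epsilon>1 > 0" "pw_op gop f ` O_nbhd G V1 \<epsilon>1 \<subseteq> S"
      using S IntD1[OF SU] by (rule bullet_openE)
    obtain V2 \<epsilon>2 where V2: "openin T V2" "e \<in> V2" "\<epsilon>2 > 0" "pw_op gop f ` O_nbhd G V2 \<epsilon>2 \<subseteq> U"
      using U IntD2[OF SU] by (rule bullet_openE)
    have "O_nbhd G (V1 \<inter> V2) (min \<epsilon>1 \<epsilon>2) \<subseteq> O_nbhd G V1 \<epsilon>1"
      "O_nbhd G (V1 \<inter> V2) (min \<epsilon>1 \<epsilon>2) \<subseteq> O_nbhd G V2 \<epsilon>2"
      by (simp_all add: O_nbhd_mono)
    then have "pw_op gop f ` O_nbhd G (V1 \<inter> V2) (min \<epsilon>1 \<epsilon>2) \<subseteq> S \<inter> U"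
      using V1(4) V2(4) by blast
    then show ?thesis
      using V1 V2 by (intro exI[of _ "V1 \<inter> V2"] exI[of _ "min \<epsilon>1 \<epsilon>2"]) (simp add: openin_Int)
  qed
  with S U show ?thesis
    unfolding bullet_open_def by blast
qed

lemma bullet_open_Union:
  assumes \<K>: "\<forall>U\<in>\<K>. bullet_open G gop e T U"
  shows "bullet_open G gop e T (\<Union>\<K>)"
proof -
  have "\<exists>V \<epsilon>. openin T V \<and> e \<in> V \<and> \<epsilon> > 0 \<and> pw_op gop f ` O_nbhd G V \<epsilon> \<subseteq> \<Union>\<K>"
    if f: "f \<in> \<Union>\<K>" for f
  proof -
    obtain U where "U \<in> \<K>" "f \<in> U"
      using f by blast
    moreover obtain V \<epsilon> where "openin T V" "e \<in> V" "\<epsilon> > 0" "pw_op gop f ` O_nbhd G V \<epsilon> \<subseteq> U"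
      using \<K> calculation by (meson bullet_openE)
    ultimately show ?thesis
      by blast
  qed
  moreover have "\<Union>\<K> \<subseteq> step_funs G"
    using \<K> unfolding bullet_open_def by blast
  ultimately show ?thesis
    unfolding bullet_open_def by blast
qed

lemma istopology_bullet_open: "istopology (bullet_open G gop e T)"
  unfolding istopology_def by (simp add: bullet_open_Int bullet_open_Union)

lemma openin_bullet_topology: "openin (bullet_topology G gop e T) = bullet_open G gop e T"
proof -
  have "bullet_topology G gop e T = topology (bullet_open G gop e T)"
    unfolding bullet_topology_def bullet_open_def ..
  then show ?thesis
    by (simp add: topology_inverse'[OF istopology_bullet_open])
qed


section \<open>Countable unions of compact sets\<close>

lemma sigma_compact_incseqE:
  assumes "sigma_compact X"
  obtains K :: "nat \<Rightarrow> 'a set" where "\<forall>n. compactin X (K n)" "incseq K" "topspace X = (\<Union>n. K n)"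
proof -
  obtain K :: "nat \<Rightarrow> 'a set" where K: "\<And>n. compactin X (K n)" "topspace X = (\<Union>n. K n)"
    using assms unfolding sigma_compact_def by blast
  define K' where "K' m = (\<Union>j\<le>m. K j)" for m
  have "compactin X (K' m)" for m
    unfolding K'_def by (intro compactin_Union) (auto simp: K)
  moreover have "incseq K'"
    unfolding K'_def by (intro monoI UN_mono) auto
  moreover have "topspace X = (\<Union>m. K' m)"
    unfolding K(2) K'_def by (blast intro: order_refl)
  ultimately show ?thesis
    using that by blast
qed

lemma sigma_compact_pairsI:
  fixes K :: "nat \<Rightarrow> nat \<Rightarrow> 'a set"
  assumes "\<And>n m. compactin X (K n m)" "topspace X = (\<Union>n. \<Union>m. K n m)"
  shows "sigma_compact X"
  unfolding sigma_compact_def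
proof (intro exI conjI allI)
  show "compactin X (case_prod K (prod_decode j))" for j
    using assms(1) by (simp add: split_beta)
  show "topspace X = (\<Union>j. case_prod K (prod_decode j))"
    unfolding assms(2)
  proof (intro equalityI subsetI)
    fix x assume "x \<in> (\<Union>n. \<Union>m. K n m)"
    then obtain n m where "x \<in> K n m"
      by blast
    then show "x \<in> (\<Union>j. case_prod K (prod_decode j))"
      by (intro UN_I[of "prod_encode (n, m)"]) simp_all
  qed (auto simp: split_beta)
qed

lemma finite_subset_incseqE:
  fixes K :: "nat \<Rightarrow> 'a set"
  assumes "finite A" "A \<subseteq> (\<Union>m. K m)" "incseq K"
  obtains m where "A \<subseteq> K m"
  using assms(1,2)
proof (induction A arbitrary: thesis rule: finite_induct)
  case (insert a A)
  obtain m where "A \<subseteq> K m"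
    using insert by blast
  moreover obtain m' where "a \<in> K m'"
    using insert by blast
  ultimately have "insert a A \<subseteq> K (max m m')"
    using assms(3) unfolding incseq_def by (meson insert_subset max.cobounded1 max.cobounded2 subsetD subset_trans)
  then show ?case
    using insert by blast
qed blast

section \<open>Topological gyrogroups\<close>

lemma openin_prod_diagonal_nbhdE:
  assumes "openin (prod_topology X X) S" "(x, x) \<in> S"
  obtains U where "openin X U" "x \<in> U" "U \<times> U \<subseteq> S"
proof -
  obtain U1 U2 where "openin X U1" "openin X U2" "x \<in> U1" "x \<in> U2" "U1 \<times> U2 \<subseteq> S"
    using openin_prod_topology_alt[THEN iffD1, OF assms(1), rule_format, OF assms(2)] by blast
  then show ?thesis
    using that[of "U1 \<inter> U2"] by (blast intro: openin_Int)
qed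

locale top_gyro = gyro G gop e neg for G gop e neg +
  fixes T :: "'a topology"
  assumes topspace_T: "topspace T = G"
    and t1_space_T: "t1_space T"
    and continuous_gop: "continuous_map (prod_topology T T) T (\<lambda>(x, y). gop x y)"
    and continuous_neg: "continuous_map T T neg"

lemma topological_gyrogroup_imp_top_gyro:
  "topological_gyrogroup G gop e neg T \<Longrightarrow> top_gyro G gop e neg T"
  unfolding topological_gyrogroup_def by (simp add: top_gyro_def top_gyro_axioms_def gyro_def)

context top_gyro
begin

abbreviation GB :: "(real \<Rightarrow> 'a) topology" where
  "GB \<equiv> bullet_topology G gop e T"

lemma continuous_map_gop:
  assumes "continuous_map X T f" "continuous_map X T g"
  shows "continuous_map X T (\<lambda>x. gop (f x) (g x))"
  using continuous_map_compose[OF continuous_map_pairedI[OF assms] continuous_gop]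
  by (simp add: o_def)

lemma continuous_map_neg:
  assumes "continuous_map X T f"
  shows "continuous_map X T (\<lambda>x. neg (f x))"
  using continuous_map_compose[OF assms continuous_neg] by (simp add: o_def)

lemma continuous_map_left_translate:
  assumes "c \<in> G" "continuous_map X T f"
  shows "continuous_map X T (\<lambda>x. gop c (f x))"
  using continuous_map_gop[of X "\<lambda>_. c", OF _ assms(2)] assms(1) topspace_T by simp

lemma openin_left_translate_preimage:
  assumes "c \<in> G" "openin T V"
  shows "openin T {z \<in> G. gop c z \<in> V}"
  using openin_continuous_map_preimage[OF continuous_map_left_translate[OF assms(1) continuous_map_id] assms(2)]
    topspace_T by simp

lemma topspace_GB: "topspace GB = step_funs G"
proof -
  have "bullet_open G gop e T (step_funs G)"
    unfolding bullet_open_def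
  proof (intro conjI ballI)
    fix f assume f: "f \<in> step_funs G"
    have "pw_op gop f ` O_nbhd G G 1 \<subseteq> step_funs G"
      using pw_op_step_funs[OF _ f] by (auto simp: O_nbhd_def)
    then show "\<exists>V \<epsilon>. openin T V \<and> e \<in> V \<and> \<epsilon> > 0 \<and> pw_op gop f ` O_nbhd G V \<epsilon> \<subseteq> step_funs G"
      using topspace_T by (intro exI[of _ G] exI[of _ 1]) auto
  qed simp
  moreover have "U \<subseteq> step_funs G" if "bullet_open G gop e T U" for U
    using that by (simp add: bullet_open_def)
  ultimately show ?thesis
    unfolding topspace_def openin_bullet_topology by blast
qed

lemma continuous_map_into_GB:
  assumes into: "\<And>x. x \<in> topspace X \<Longrightarrow> \<phi> x \<in> step_funs G"
    and near: "\<And>x V \<epsilon>. x \<in> topspace X \<Longrightarrow> openin T V \<Longrightarrow> e \<in> V \<Longrightarrow> \<epsilon> > 0 \<Longrightarrow>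
       \<exists>N. openin X N \<and> x \<in> N \<and> (\<forall>y\<in>N. \<phi> y \<in> pw_op gop (\<phi> x) ` O_nbhd G V \<epsilon>)"
  shows "continuous_map X GB \<phi>"
  unfolding continuous_map
proof (intro conjI allI impI)
  show "\<phi> ` topspace X \<subseteq> topspace GB"
    using into topspace_GB by auto
  fix U assume "openin GB U"
  then have U: "bullet_open G gop e T U"
    by (simp add: openin_bullet_topology)
  show "openin X {x \<in> topspace X. \<phi> x \<in> U}"
  proof (rule openin_subopen[THEN iffD2], intro ballI)
    fix x assume "x \<in> {x \<in> topspace X. \<phi> x \<in> U}"
    then have x: "x \<in> topspace X" "\<phi> x \<in> U"
      by simp_all
    obtain V \<epsilon> where V: "openin T V" "e \<in> V" "\<epsilon> > 0" "pw_op gop (\<phi> x) ` O_nbhd G V \<epsilon> \<subseteq> U"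
      using U x(2) by (rule bullet_openE)
    obtain N where N: "openin X N" "x \<in> N" "\<forall>y\<in>N. \<phi> y \<in> pw_op gop (\<phi> x) ` O_nbhd G V \<epsilon>"
      using near[OF x(1) V(1-3)] by blast
    then have "N \<subseteq> {x \<in> topspace X. \<phi> x \<in> U}"
      using V(4) openin_subset[OF N(1)] by blast
    with N(1,2) show "\<exists>N. openin X N \<and> x \<in> N \<and> N \<subseteq> {x \<in> topspace X. \<phi> x \<in> U}"
      by blast
  qed
qed

end

section \<open>Step functions as continuous images of cubes\<close>

text \<open>Only the number of jump points \<open>t i \<le> r\<close> matters, so the jump points need not be ordered
  and the parametrisation is defined on the whole cube \<open>[0,1]^n\<close>.\<close>
definition step_fun_of :: "nat \<Rightarrow> (nat \<Rightarrow> real) \<times> (nat \<Rightarrow> 'a) \<Rightarrow> real \<Rightarrow> 'a" where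
  "step_fun_of n tc = (\<lambda>r. if r \<in> J then snd tc (card {i. i < n \<and> fst tc i \<le> r}) else undefined)"

lemma card_bounded_index_le: "card {i. i < n \<and> P i} \<le> n"
  using card_mono[of "{..<n}" "{i. i < n \<and> P i}"] by auto

lemma step_fun_of_in_step_funs:
  assumes "\<forall>k\<le>n. c k \<in> G"
  shows "step_fun_of n (t, c) \<in> step_funs G"
proof (rule step_funsI)
  show "jumps_only_at (t ` {..<n}) (step_fun_of n (t, c))"
    unfolding jumps_only_at_def
  proof (intro ballI impI)
    fix r r' assume "r \<in> J" "r' \<in> J" and rr': "r \<le> r' \<and> t ` {..<n} \<inter> {r<..r'} = {}"
    then have "{i. i < n \<and> t i \<le> r} = {i. i < n \<and> t i \<le> r'}"
      by fastforce
    with \<open>r \<in> J\<close> \<open>r' \<in> J\<close> show "step_fun_of n (t, c) r = step_fun_of n (t, c) r'"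
      by (simp add: step_fun_of_def)
  qed
qed (use assms card_bounded_index_le in \<open>auto simp: step_fun_of_def\<close>)

lemma jump_counts_eq_off_segments:
  fixes t t' :: "nat \<Rightarrow> real"
  assumes "r \<notin> (\<Union>i<n. {min (t i) (t' i)..max (t i) (t' i)})"
  shows "{i. i < n \<and> t i \<le> r} = {i. i < n \<and> t' i \<le> r}"
proof -
  have "t i \<le> r \<longleftrightarrow> t' i \<le> r" if "i < n" for i
  proof -
    have "\<not> (min (t i) (t' i) \<le> r \<and> r \<le> max (t i) (t' i))"
      using assms that by auto
    then show ?thesis
      by linarith
  qed
  then show ?thesis
    by blast
qed

lemma step_fun_of_same_index_off_segments:
  fixes t t' :: "nat \<Rightarrow> real"
  assumes "r \<in> J" "r \<notin> (\<Union>i<n. {min (t i) (t' i)..max (t i) (t' i)})"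
  obtains k where "k \<le> n" "step_fun_of n (t, c) r = c k" "step_fun_of n (t', c') r = c' k"
proof
  show "card {i. i < n \<and> t i \<le> r} \<le> n"
    by (rule card_bounded_index_le)
  show "step_fun_of n (t, c) r = c (card {i. i < n \<and> t i \<le> r})"
    "step_fun_of n (t', c') r = c' (card {i. i < n \<and> t i \<le> r})"
    using assms jump_counts_eq_off_segments[OF assms(2)] by (simp_all add: step_fun_of_def)
qed

lemma measure_segments_le:
  fixes t t' :: "nat \<Rightarrow> real"
  shows "measure lebesgue (\<Union>i<n. {min (t i) (t' i)..max (t i) (t' i)}) \<le> (\<Sum>i<n. \<bar>t' i - t i\<bar>)"
proof -
  have "measure lebesgue (\<Union>i<n. {min (t i) (t' i)..max (t i) (t' i)})
      \<le> (\<Sum>i<n. measure lebesgue {min (t i) (t' i)..max (t i) (t' i)})"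
    by (rule measure_UNION_le) auto
  also have "\<dots> = (\<Sum>i<n. \<bar>t' i - t i\<bar>)"
    by (intro sum.cong refl) (simp add: max_def min_def)
  finally show ?thesis .
qed

lemma step_fun_of_surjE:
  assumes f: "f \<in> step_funs G"
  obtains n t c where "t \<in> PiE {..<n} (\<lambda>_. {0..1})" "c \<in> PiE {..n} (\<lambda>_. f ` J)"
    "f = step_fun_of n (t, c)"
proof -
  obtain a n where a: "unit_partition a n" and pieces: "\<forall>k<n. \<forall>r\<in>{a k..<a (Suc k)}. f r = f (a k)"
    by (rule step_funsE[OF f])
  have "n > 0"
    using a by (cases n) (auto simp: unit_partition_def)
  define t where "t = restrict (\<lambda>i. a (Suc i)) {..<n}"
  define c where "c = restrict (\<lambda>k. f (a (min k (n - 1)))) {..n}"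
  have "a (Suc i) \<in> {0..1}" if "i < n" for i
    using unit_partition_mono[OF a, of 0 "Suc i"] unit_partition_mono[OF a, of "Suc i" n] a that
    by (simp add: unit_partition_def)
  then have t: "t \<in> PiE {..<n} (\<lambda>_. {0..1})"
    by (simp add: t_def)
  have "a (min k (n - 1)) \<in> J" for k
    using unit_partition_left_in_J[OF a] \<open>n > 0\<close> by simp
  then have c: "c \<in> PiE {..n} (\<lambda>_. f ` J)"
    by (simp add: c_def)
  have "f r = step_fun_of n (t, c) r" for r
  proof (cases "r \<in> J")
    case True
    obtain k where k: "k < n" "r \<in> {a k..<a (Suc k)}"
      using unit_partition_cover[OF a True] by blast
    have "{i. i < n \<and> t i \<le> r} = {..<k}"
      using unit_partition_count_below[OF a k] by (auto simp: t_def)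
    moreover have "f r = f (a k)"
      using pieces k by blast
    ultimately show ?thesis
      using True k by (simp add: step_fun_of_def c_def)
  qed (simp add: step_fun_of_def step_fun_undefined[OF f])
  then show ?thesis
    using that t c by blast
qed

lemma step_fun_in_cube_imageE:
  fixes K :: "nat \<Rightarrow> 'a set"
  assumes f: "f \<in> step_funs G" and K: "G \<subseteq> (\<Union>m. K m)" "incseq K"
  obtains n m where "f \<in> step_fun_of n ` (PiE {..<n} (\<lambda>_. {0..1}) \<times> PiE {..n} (\<lambda>_. K m))"
proof -
  obtain n t c where t: "t \<in> PiE {..<n} (\<lambda>_. {0..1})" and c: "c \<in> PiE {..n} (\<lambda>_. f ` J)"
    and fnc: "f = step_fun_of n (t, c)"
    by (rule step_fun_of_surjE[OF f])
  have "f ` J \<subseteq> (\<Union>m. K m)"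
    using step_fun_in[OF f] K(1) by blast
  then obtain m where "f ` J \<subseteq> K m"
    by (rule finite_subset_incseqE[OF step_fun_finite_range[OF f] _ K(2)])
  then have "c \<in> PiE {..n} (\<lambda>_. K m)"
    using PiE_mono[of "{..n}" "\<lambda>_. f ` J" "\<lambda>_. K m"] c by blast
  then have "f \<in> step_fun_of n ` (PiE {..<n} (\<lambda>_. {0..1}) \<times> PiE {..n} (\<lambda>_. K m))"
    unfolding fnc by (rule imageI[OF SigmaI[OF t]])
  then show ?thesis
    by (rule that)
qed

context top_gyro
begin

text \<open>The quotient \<open>\<ominus>f \<oplus> f'\<close> leaves \<open>V\<close> only on the segments swept by the moving jump points.\<close>
lemma step_fun_of_perturb:
  assumes c: "\<forall>k\<le>n. c k \<in> G" and c': "\<forall>k\<le>n. c' k \<in> G"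
    and V: "\<forall>k\<le>n. gop (neg (c k)) (c' k) \<in> V"
    and t: "(\<Sum>i<n. \<bar>t' i - t i\<bar>) < \<epsilon>"
  shows "step_fun_of n (t', c') \<in> pw_op gop (step_fun_of n (t, c)) ` O_nbhd G V \<epsilon>"
proof -
  define f where "f = step_fun_of n (t, c)"
  define f' where "f' = step_fun_of n (t', c')"
  define g where "g = pw_op (\<lambda>a b. gop (neg a) b) f f'"
  have f: "f \<in> step_funs G" and f': "f' \<in> step_funs G"
    using step_fun_of_in_step_funs c c' by (simp_all add: f_def f'_def)
  then have g: "g \<in> step_funs G"
    unfolding g_def by (intro pw_op_step_funs) auto
  have "f' = pw_op gop f g"
  proof
    fix r show "f' r = pw_op gop f g r"
      using step_fun_in[OF f, of r] step_fun_in[OF f', of r] step_fun_undefined[OF f', of r]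
      by (simp add: g_def pw_op_def)
  qed
  moreover have "{r \<in> J. g r \<notin> V} \<subseteq> (\<Union>i<n. {min (t i) (t' i)..max (t i) (t' i)})"
  proof
    fix r assume r: "r \<in> {r \<in> J. g r \<notin> V}"
    show "r \<in> (\<Union>i<n. {min (t i) (t' i)..max (t i) (t' i)})"
    proof (rule ccontr)
      assume "r \<notin> (\<Union>i<n. {min (t i) (t' i)..max (t i) (t' i)})"
      then obtain k where "k \<le> n" "f r = c k" "f' r = c' k"
        using step_fun_of_same_index_off_segments r unfolding f_def f'_def by blast
      then show False
        using r V by (auto simp: g_def pw_op_def)
    qed
  qed
  then have "measure lebesgue {r \<in> J. g r \<notin> V} \<le> measure lebesgue (\<Union>i<n. {min (t i) (t' i)..max (t i) (t' i)})"
    by (rule measure_mono_fmeasurable[OF _ step_fun_level_set_measurable[OF g]])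
      (auto intro: bounded_set_imp_lmeasurable)
  then have "g \<in> O_nbhd G V \<epsilon>"
    using g measure_segments_le[of t t' n] t by (simp add: O_nbhd_def)
  ultimately show ?thesis
    unfolding f_def f'_def by blast
qed

abbreviation param_space :: "nat \<Rightarrow> ((nat \<Rightarrow> real) \<times> (nat \<Rightarrow> 'a)) topology" where
  "param_space n \<equiv> prod_topology (product_topology (\<lambda>_. euclideanreal) {..<n}) (product_topology (\<lambda>_. T) {..n})"

lemma continuous_map_step_fun_of: "continuous_map (param_space n) GB (step_fun_of n)"
proof (rule continuous_map_into_GB)
  fix x assume "x \<in> topspace (param_space n)"
  then show "step_fun_of n x \<in> step_funs G"
    using topspace_T by (cases x) (auto simp: PiE_iff intro!: step_fun_of_in_step_funs)
next
  fix x V and \<epsilon> :: real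
  assume x: "x \<in> topspace (param_space n)" and V: "openin T V" "e \<in> V" and "\<epsilon> > 0"
  obtain t c where xtc: "x = (t, c)"
    by fastforce
  have c: "\<forall>k\<le>n. c k \<in> G"
    using x xtc topspace_T by (auto simp: PiE_iff)
  define \<delta> where "\<delta> = \<epsilon> / (n + 1)"
  have "\<delta> > 0"
    using \<open>\<epsilon> > 0\<close> by (simp add: \<delta>_def)
  define N where "N = PiE {..<n} (\<lambda>i. ball (t i) \<delta>) \<times> PiE {..n} (\<lambda>k. {z \<in> G. gop (neg (c k)) z \<in> V})"
  have "openin (param_space n) N"
    unfolding N_def openin_prod_Times_iff
    using openin_left_translate_preimage c V(1) by (simp add: openin_PiE)
  moreover have "x \<in> N"
    using x xtc c V(2) \<open>\<delta> > 0\<close> by (auto simp: N_def PiE_iff)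
  moreover have "step_fun_of n y \<in> pw_op gop (step_fun_of n x) ` O_nbhd G V \<epsilon>" if "y \<in> N" for y
  proof -
    obtain t' c' where ytc: "y = (t', c')" and t': "\<forall>i<n. \<bar>t' i - t i\<bar> < \<delta>"
      and c': "\<forall>k\<le>n. c' k \<in> G \<and> gop (neg (c k)) (c' k) \<in> V"
      using \<open>y \<in> N\<close> unfolding N_def by (fastforce simp: PiE_iff dist_real_def abs_minus_commute)
    have "(\<Sum>i<n. \<bar>t' i - t i\<bar>) \<le> n * \<delta>"
      using sum_bounded_above[of "{..<n}" "\<lambda>i. \<bar>t' i - t i\<bar>" \<delta>] t' by (simp add: less_imp_le)
    also have "\<dots> < \<epsilon>"
      using \<open>\<epsilon> > 0\<close> by (simp add: \<delta>_def field_simps)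
    finally show ?thesis
      using step_fun_of_perturb[OF c] c' unfolding xtc ytc by blast
  qed
  ultimately show "\<exists>N. openin (param_space n) N \<and> x \<in> N \<and>
      (\<forall>y\<in>N. step_fun_of n y \<in> pw_op gop (step_fun_of n x) ` O_nbhd G V \<epsilon>)"
    by blast
qed

lemma sigma_compact_GB_if_sigma_compact:
  assumes "sigma_compact T"
  shows "sigma_compact GB"
proof -
  obtain K where K: "\<forall>m. compactin T (K m)" "incseq K" "topspace T = (\<Union>m. K m)"
    by (rule sigma_compact_incseqE[OF assms])
  define S where "S n m = step_fun_of n ` (PiE {..<n} (\<lambda>_. {0..1::real}) \<times> PiE {..n} (\<lambda>_. K m))" for n m
  have compact_S: "compactin GB (S n m)" for n m
  proof -
    have "compactin (param_space n) (PiE {..<n} (\<lambda>_. {0..1::real}) \<times> PiE {..n} (\<lambda>_. K m))"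
      using K(1) by (simp add: compactin_Times compactin_PiE)
    then show ?thesis
      unfolding S_def using continuous_map_step_fun_of by (rule image_compactin)
  qed
  moreover have "topspace GB = (\<Union>n. \<Union>m. S n m)"
  proof
    show "(\<Union>n. \<Union>m. S n m) \<subseteq> topspace GB"
      using compactin_subset_topspace[OF compact_S] by blast
    show "topspace GB \<subseteq> (\<Union>n. \<Union>m. S n m)"
    proof
      fix f assume "f \<in> topspace GB"
      then have "f \<in> step_funs G"
        by (simp add: topspace_GB)
      then obtain n m where "f \<in> S n m"
        unfolding S_def using K(3) topspace_T by (blast elim: step_fun_in_cube_imageE[OF _ _ K(2)])
      then show "f \<in> (\<Union>n. \<Union>m. S n m)"
        by blast
    qed
  qed
  ultimately show ?thesis
    by (rule sigma_compact_pairsI)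
qed

end

section \<open>The constant step functions\<close>

lemma step_fun_hits_on_long_interval:
  assumes g: "g \<in> step_funs G" and small: "measure lebesgue {r \<in> J. g r \<notin> V} < y - x"
    and I: "{x..<y} \<subseteq> J"
  shows "\<exists>s\<in>{x..<y}. g s \<in> V"
proof (rule ccontr)
  assume "\<not> (\<exists>s\<in>{x..<y}. g s \<in> V)"
  then have "{x..<y} \<subseteq> {r \<in> J. g r \<notin> V}"
    using I by blast
  then have "measure lebesgue {x..<y} \<le> measure lebesgue {r \<in> J. g r \<notin> V}"
    by (rule measure_mono_fmeasurable[OF _ _ step_fun_level_set_lmeasurable[OF g]]) simp
  then show False
    using small measure_nonneg[of lebesgue "{r \<in> J. g r \<notin> V}"] by (cases "x \<le> y") auto
qed

lemma const_step_at_0 [simp]: "const_step c 0 = c"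
  by (simp add: const_step_def J_def)

lemma measure_const_step_outside:
  "measure lebesgue {r \<in> J. const_step c r \<notin> W} = (if c \<in> W then 0 else 1)"
proof -
  have "{r \<in> J. const_step c r \<notin> W} = (if c \<in> W then {} else J)"
    by (auto simp: const_step_def)
  then show ?thesis
    by (simp add: J_def)
qed

lemma step_fun_nonconstE:
  assumes f: "f \<in> step_funs G" and "f \<notin> const_step ` G"
  obtains r1 r2 where "r1 \<in> J" "r2 \<in> J" "f r1 \<noteq> f r2"
proof -
  have "0 \<in> J"
    by (simp add: J_def)
  have "f \<noteq> const_step (f 0)"
    using assms step_fun_in[OF f \<open>0 \<in> J\<close>] by blast
  then obtain r where "f r \<noteq> const_step (f 0) r"
    by blast
  then have "r \<in> J" "f r \<noteq> f 0"
    using step_fun_undefined[OF f, of r] by (auto simp: const_step_def split: if_splits)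
  with \<open>0 \<in> J\<close> that show ?thesis
    by blast
qed

lemma measure_pw_op_outside_le:
  assumes op_closed: "\<And>x y. x \<in> G \<Longrightarrow> y \<in> G \<Longrightarrow> op x y \<in> G"
    and f: "f \<in> step_funs G" and g: "g \<in> step_funs G"
    and into: "\<And>r. r \<in> J \<Longrightarrow> f r \<in> W \<Longrightarrow> g r \<in> V \<Longrightarrow> op (f r) (g r) \<in> W"
  shows "measure lebesgue {r \<in> J. pw_op op f g r \<notin> W}
    \<le> measure lebesgue {r \<in> J. f r \<notin> W} + measure lebesgue {r \<in> J. g r \<notin> V}"
proof -
  have h: "pw_op op f g \<in> step_funs G"
    using op_closed f g by (rule pw_op_step_funs)
  have "{r \<in> J. pw_op op f g r \<notin> W} \<subseteq> {r \<in> J. f r \<notin> W} \<union> {r \<in> J. g r \<notin> V}"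
    using into by (auto simp: pw_op_def)
  moreover have "{r \<in> J. f r \<notin> W} \<union> {r \<in> J. g r \<notin> V} \<in> lmeasurable"
    using step_fun_level_set_lmeasurable[OF f] step_fun_level_set_lmeasurable[OF g] by (rule fmeasurable.Un)
  ultimately have "measure lebesgue {r \<in> J. pw_op op f g r \<notin> W}
      \<le> measure lebesgue ({r \<in> J. f r \<notin> W} \<union> {r \<in> J. g r \<notin> V})"
    using step_fun_level_set_measurable[OF h] by (intro measure_mono_fmeasurable)
  also have "\<dots> \<le> measure lebesgue {r \<in> J. f r \<notin> W} + measure lebesgue {r \<in> J. g r \<notin> V}"
    by (rule measure_Un_le[OF step_fun_level_set_measurable[OF f] step_fun_level_set_measurable[OF g]])
  finally show ?thesis .
qed

lemma pw_op_not_const_step: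
  assumes g: "g \<in> O_nbhd G V (min (y1 - x1) (y2 - x2))"
    and I1: "{x1..<y1} \<subseteq> J" "\<forall>s\<in>{x1..<y1}. f s = c1"
    and I2: "{x2..<y2} \<subseteq> J" "\<forall>s\<in>{x2..<y2}. f s = c2"
    and V: "\<And>v1 v2. v1 \<in> V \<Longrightarrow> v2 \<in> V \<Longrightarrow> op c1 v1 \<noteq> op c2 v2"
  shows "pw_op op f g \<notin> const_step ` G"
proof
  assume "pw_op op f g \<in> const_step ` G"
  then obtain c where c: "pw_op op f g = const_step c"
    by blast
  have gs: "g \<in> step_funs G" and small: "measure lebesgue {r \<in> J. g r \<notin> V} < min (y1 - x1) (y2 - x2)"
    using g by (simp_all add: O_nbhd_def)
  then obtain s1 s2 where s1: "s1 \<in> {x1..<y1}" "g s1 \<in> V" and s2: "s2 \<in> {x2..<y2}" "g s2 \<in> V"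
    using step_fun_hits_on_long_interval[OF gs _ I1(1)] step_fun_hits_on_long_interval[OF gs _ I2(1)]
    by (metis min_less_iff_conj)
  have "f s1 = c1" "f s2 = c2"
    using I1(2) I2(2) s1(1) s2(1) by blast+
  then have "pw_op op f g s1 = op c1 (g s1)" "pw_op op f g s2 = op c2 (g s2)"
    using s1(1) s2(1) I1(1) I2(1) by (auto simp: pw_op_def)
  moreover have "pw_op op f g s1 = pw_op op f g s2"
    using s1(1) s2(1) I1(1) I2(1) unfolding c const_step_def by auto
  ultimately show False
    using V[OF s1(2) s2(2)] by simp
qed

context top_gyro
begin

text \<open>Since \<open>T\<close> is only assumed \<open>T\<^sub>1\<close>, the translates are separated through the continuous map
  \<open>(v\<^sub>1, v\<^sub>2) \<mapsto> \<ominus>v\<^sub>2 \<oplus> (\<ominus>c\<^sub>2 \<oplus> (c\<^sub>1 \<oplus> v\<^sub>1))\<close>, which takes the value \<open>\<ominus>c\<^sub>2 \<oplus> c\<^sub>1 \<noteq> 0\<close> at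
  \<open>(0, 0)\<close> and the value \<open>0\<close> wherever \<open>c\<^sub>1 \<oplus> v\<^sub>1 = c\<^sub>2 \<oplus> v\<^sub>2\<close>.\<close>
lemma separating_nbhdE:
  assumes c1: "c1 \<in> G" and c2: "c2 \<in> G" and "c1 \<noteq> c2"
  obtains V where "openin T V" "e \<in> V" "\<And>v1 v2. v1 \<in> V \<Longrightarrow> v2 \<in> V \<Longrightarrow> gop c1 v1 \<noteq> gop c2 v2"
proof -
  define h where "h v = gop (neg (snd v)) (gop (neg c2) (gop c1 (fst v)))" for v
  have "continuous_map (prod_topology T T) T h"
    unfolding h_def using c1 c2
    by (intro continuous_map_gop continuous_map_neg continuous_map_left_translate continuous_map_fst
        continuous_map_snd) simp_all
  moreover have "openin T (topspace T - {e})"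
    using t1_space_T by (simp add: openin_diff t1_space_openin_delete_alt)
  ultimately have S: "openin (prod_topology T T) {v \<in> topspace (prod_topology T T). h v \<in> topspace T - {e}}"
    (is "openin _ ?S") by (rule openin_continuous_map_preimage)
  have "gop (neg c2) c1 \<noteq> e"
    using gop_right_cancel[OF c2 c1] gop_right_e[OF c2] \<open>c1 \<noteq> c2\<close> by metis
  then have "(e, e) \<in> ?S"
    using c1 c2 topspace_T by (simp add: h_def)
  then obtain V where V: "openin T V" "e \<in> V" "V \<times> V \<subseteq> ?S"
    by (rule openin_prod_diagonal_nbhdE[OF S])
  have "gop c1 v1 \<noteq> gop c2 v2" if v: "v1 \<in> V" "v2 \<in> V" for v1 v2
  proof
    assume eq: "gop c1 v1 = gop c2 v2"
    have "v1 \<in> G" "v2 \<in> G"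
      using v openin_subset[OF V(1)] topspace_T by blast+
    then have "h (v1, v2) = e"
      using eq c2 by (simp add: h_def)
    moreover have "(v1, v2) \<in> ?S"
      using v V(3) by blast
    ultimately show False
      by blast
  qed
  with V(1,2) show ?thesis
    by (rule that)
qed

lemma closedin_const_steps: "closedin GB (const_step ` G)"
  unfolding closedin_def
proof
  show "const_step ` G \<subseteq> topspace GB"
    using const_step_in_step_funs topspace_GB by auto
  show "openin GB (topspace GB - const_step ` G)"
    unfolding openin_bullet_topology bullet_open_def topspace_GB
  proof (intro conjI ballI)
    fix f assume "f \<in> step_funs G - const_step ` G"
    then have f: "f \<in> step_funs G" "f \<notin> const_step ` G"
      by auto
    obtain r1 r2 where r: "r1 \<in> J" "r2 \<in> J" "f r1 \<noteq> f r2"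
      using step_fun_nonconstE[OF f] .
    obtain x1 y1 where I1: "x1 < y1" "{x1..<y1} \<subseteq> J" "\<forall>s\<in>{x1..<y1}. f s = f r1"
      by (rule step_fun_constant_pieceE[OF f(1) r(1)])
    obtain x2 y2 where I2: "x2 < y2" "{x2..<y2} \<subseteq> J" "\<forall>s\<in>{x2..<y2}. f s = f r2"
      by (rule step_fun_constant_pieceE[OF f(1) r(2)])
    obtain V where V: "openin T V" "e \<in> V" "\<And>v1 v2. v1 \<in> V \<Longrightarrow> v2 \<in> V \<Longrightarrow> gop (f r1) v1 \<noteq> gop (f r2) v2"
      using separating_nbhdE[OF step_fun_in[OF f(1) r(1)] step_fun_in[OF f(1) r(2)] r(3)] by blast
    have "pw_op gop f g \<in> step_funs G - const_step ` G" if "g \<in> O_nbhd G V (min (y1 - x1) (y2 - x2))" for g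
      using pw_op_not_const_step[OF that I1(2,3) I2(2,3) V(3)] pw_op_step_funs[OF _ f(1)] that
      by (simp add: O_nbhd_def)
    then have "pw_op gop f ` O_nbhd G V (min (y1 - x1) (y2 - x2)) \<subseteq> step_funs G - const_step ` G"
      by (rule image_subsetI)
    moreover have "min (y1 - x1) (y2 - x2) > 0"
      using I1(1) I2(1) by simp
    ultimately show "\<exists>V \<epsilon>. openin T V \<and> e \<in> V \<and> \<epsilon> > 0 \<and>
        pw_op gop f ` O_nbhd G V \<epsilon> \<subseteq> step_funs G - const_step ` G"
      using V(1,2) by blast
  qed blast
qed

definition mostly_in :: "'a set \<Rightarrow> (real \<Rightarrow> 'a) set" where
  "mostly_in W = {f \<in> step_funs G. measure lebesgue {r \<in> J. f r \<notin> W} < 1/2}"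

text \<open>As \<open>f\<close> takes only finitely many values \<open>c\<close>, the conditions \<open>c \<oplus> v \<in> W\<close> for those \<open>c \<in> W\<close>
  define a neighbourhood \<open>V\<close> of \<open>0\<close>, and \<open>f \<oplus> g\<close> leaves \<open>W\<close> only where \<open>f\<close> leaves \<open>W\<close> or \<open>g\<close> leaves \<open>V\<close>.\<close>
lemma openin_mostly_in:
  assumes W: "openin T W"
  shows "openin GB (mostly_in W)"
  unfolding openin_bullet_topology bullet_open_def
proof (intro conjI ballI)
  show "mostly_in W \<subseteq> step_funs G"
    by (auto simp: mostly_in_def)
  fix f assume "f \<in> mostly_in W"
  then have f: "f \<in> step_funs G" and f_small: "measure lebesgue {r \<in> J. f r \<notin> W} < 1/2"
    by (simp_all add: mostly_in_def)
  define F where "F = f ` J \<inter> W"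
  have "finite F" "F \<subseteq> G"
    using step_fun_finite_range[OF f] step_fun_in[OF f] by (auto simp: F_def)
  define V where "V = (\<Inter>c\<in>F. {z \<in> G. gop c z \<in> W}) \<inter> topspace T"
  have "openin T V"
    unfolding V_def using \<open>finite F\<close> \<open>F \<subseteq> G\<close> W
    by (intro openin_INT) (auto intro: openin_left_translate_preimage)
  moreover have "e \<in> V"
    using \<open>F \<subseteq> G\<close> topspace_T by (auto simp: V_def F_def)
  moreover define \<epsilon> where "\<epsilon> = 1/2 - measure lebesgue {r \<in> J. f r \<notin> W}"
  moreover have "pw_op gop f g \<in> mostly_in W" if g: "g \<in> O_nbhd G V \<epsilon>" for g
  proof -
    have gs: "g \<in> step_funs G" and g_small: "measure lebesgue {r \<in> J. g r \<notin> V} < \<epsilon>"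
      using g by (simp_all add: O_nbhd_def)
    have "measure lebesgue {r \<in> J. pw_op gop f g r \<notin> W}
        \<le> measure lebesgue {r \<in> J. f r \<notin> W} + measure lebesgue {r \<in> J. g r \<notin> V}"
      by (rule measure_pw_op_outside_le[OF _ f gs]) (auto simp: V_def F_def)
    also have "\<dots> < 1/2"
      using g_small by (simp add: \<epsilon>_def)
    finally show ?thesis
      using pw_op_step_funs[OF _ f gs] by (simp add: mostly_in_def)
  qed
  ultimately show "\<exists>V \<epsilon>. openin T V \<and> e \<in> V \<and> \<epsilon> > 0 \<and> pw_op gop f ` O_nbhd G V \<epsilon> \<subseteq> mostly_in W"
    using f_small by (intro exI[of _ V] exI[of _ \<epsilon>]) (auto simp: \<epsilon>_def)
qed

lemma continuous_map_eval_const_steps: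
  "continuous_map (subtopology GB (const_step ` G)) T (\<lambda>f. f 0)"
  unfolding continuous_map
proof (intro conjI allI impI)
  show "(\<lambda>f. f 0) ` topspace (subtopology GB (const_step ` G)) \<subseteq> topspace T"
    using topspace_T by (auto simp: const_step_at_0)
  fix W assume "openin T W"
  have "const_step c \<in> mostly_in W \<longleftrightarrow> c \<in> W" if "c \<in> G" for c
    using const_step_in_step_funs[OF that] by (simp add: mostly_in_def measure_const_step_outside)
  then have "{f \<in> topspace (subtopology GB (const_step ` G)). f 0 \<in> W} = const_step ` G \<inter> mostly_in W"
    using const_step_in_step_funs by (auto simp: topspace_GB const_step_at_0)
  then show "openin (subtopology GB (const_step ` G)) {f \<in> topspace (subtopology GB (const_step ` G)). f 0 \<in> W}"
    using openin_subtopology_Int2[OF openin_mostly_in[OF \<open>openin T W\<close>]] by simp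
qed

lemma compactin_const_step_preimage:
  assumes "compactin GB K"
  shows "compactin T {c \<in> G. const_step c \<in> K}"
proof -
  have "compactin (subtopology GB (const_step ` G)) (const_step ` G \<inter> K)"
    using closed_Int_compactin[OF closedin_const_steps assms] by (simp add: compactin_subtopology)
  then have "compactin T ((\<lambda>f. f 0) ` (const_step ` G \<inter> K))"
    by (rule image_compactin[OF _ continuous_map_eval_const_steps])
  moreover have "(\<lambda>f. f 0) ` (const_step ` G \<inter> K) = {c \<in> G. const_step c \<in> K}"
  proof (intro equalityI subsetI)
    fix c assume "c \<in> {c \<in> G. const_step c \<in> K}"
    then show "c \<in> (\<lambda>f. f 0) ` (const_step ` G \<inter> K)"
      by (intro image_eqI[of _ _ "const_step c"]) (simp_all add: const_step_at_0)
  qed (auto simp: const_step_at_0)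
  ultimately show ?thesis
    by simp
qed

lemma sigma_compact_if_sigma_compact_GB:
  assumes "sigma_compact GB"
  shows "sigma_compact T"
proof -
  obtain K :: "nat \<Rightarrow> (real \<Rightarrow> 'a) set" where K: "\<forall>n. compactin GB (K n)" "topspace GB = (\<Union>n. K n)"
    using assms unfolding sigma_compact_def by blast
  have "const_step c \<in> (\<Union>n. K n)" if "c \<in> G" for c
    using K(2) const_step_in_step_funs[OF that] by (simp add: topspace_GB)
  then have "topspace T = (\<Union>n. {c \<in> G. const_step c \<in> K n})"
    using topspace_T by blast
  moreover have "\<forall>n. compactin T {c \<in> G. const_step c \<in> K n}"
    using K(1) compactin_const_step_preimage by blast
  ultimately show ?thesis
    unfolding sigma_compact_def by (intro exI[of _ "\<lambda>n. {c \<in> G. const_step c \<in> K n}"]) simp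
qed

end

theorem mainTheorem11:
  fixes G :: "'a set" and gop :: "'a \<Rightarrow> 'a \<Rightarrow> 'a" and e :: 'a and neg :: "'a \<Rightarrow> 'a"
    and T :: "'a topology"
  assumes "topological_gyrogroup G gop e neg T"
  shows "sigma_compact (bullet_topology G gop e T) \<longleftrightarrow> sigma_compact T"
proof -
  interpret top_gyro G gop e neg T
    using assms by (rule topological_gyrogroup_imp_top_gyro)
  show ?thesis
    using sigma_compact_GB_if_sigma_compact sigma_compact_if_sigma_compact_GB by blast
qed

end
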